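(* Let $F$ be a Henselian discrete valuation field with ring of integers $\mathcal{O}_F$, uniformizer $t$, and infinite residue field $K$; write $x\mapsto\bar{x}$ for the residue map. Let $q\in\mathcal{O}_F[X]$ be a polynomial of degree $\ge1$ such that $q'$ has non-zero image in $K[X]$, and let $A\in\{1,2\}$. Then there exist finitely many $b_1,\dots,b_m\in\mathcal{O}_F$ such that whenever $b\in\mathcal{O}_F$ and the set $\{x\in\mathcal{O}_F:q(x)\in b+t^A\mathcal{O}_F,\ \bar{q}'(\bar{x})=0\}$ is non-empty, we have $b\equiv b_i\bmod t^A\mathcal{O}_F$ for some $i\in\{1,\dots,m\}$.
   Context: $\bar{q}$ denotes the image of $q$ in $K[X]$. *)

theory Defs
  imports "HOL-Computational_Algebra.Polynomial"
begin

text \<open>A (normalized) discrete valuation on a field, given by its values on nonzero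
  elements (the value at 0 is irrelevant, conventionally +infinity).\<close>
definition discrete_valuation :: "('a::field \<Rightarrow> int) \<Rightarrow> bool" where
  "discrete_valuation v \<longleftrightarrow>
     (\<forall>x y. x \<noteq> 0 \<longrightarrow> y \<noteq> 0 \<longrightarrow> v (x * y) = v x + v y) \<and>
     (\<forall>x y. x \<noteq> 0 \<longrightarrow> y \<noteq> 0 \<longrightarrow> x + y \<noteq> 0 \<longrightarrow> min (v x) (v y) \<le> v (x + y)) \<and>
     (\<exists>t. t \<noteq> 0 \<and> v t = 1)"

definition valring :: "('a::field \<Rightarrow> int) \<Rightarrow> 'a set" where
  "valring v = {x. x = 0 \<or> 0 \<le> v x}"

definition maxideal :: "('a::field \<Rightarrow> int) \<Rightarrow> 'a set" where
  "maxideal v = {x. x = 0 \<or> 0 < v x}"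

definition residue :: "('a::field \<Rightarrow> int) \<Rightarrow> 'a \<Rightarrow> 'a set" where
  "residue v x = {y \<in> valring v. y - x \<in> maxideal v}"

definition infinite_residue_field :: "('a::field \<Rightarrow> int) \<Rightarrow> bool" where
  "infinite_residue_field v \<longleftrightarrow> infinite (residue v ` valring v)"

definition henselian :: "('a::field \<Rightarrow> int) \<Rightarrow> bool" where
  "henselian v \<longleftrightarrow>
     (\<forall>p a. (\<forall>i. coeff p i \<in> valring v) \<longrightarrow> a \<in> valring v \<longrightarrow>
        poly p a \<in> maxideal v \<longrightarrow> poly (pderiv p) a \<notin> maxideal v \<longrightarrow>
        (\<exists>b \<in> valring v. poly p b = 0 \<and> b - a \<in> maxideal v))"

end

theory Submission
  imports Defs
begin

text \<open>If \<open>q'(x) \<equiv> 0\<close> modulo the maximal ideal, then \<open>q'\<close> reduces to a nonzero polynomial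
  in \<open>K[X]\<close> with \<open>x\<close> among its roots, and such a polynomial has only finitely many roots
  in \<open>K\<close>; pick representatives \<open>s\<close> of them in \<open>\<O>\<^sub>F\<close>. If \<open>x = s + t u\<close>, Taylor expansion gives
  \<open>q(x) = q(s) + t u q'(s) + t\<^sup>2 u\<^sup>2 r\<close>, and \<open>q'(s) \<equiv> q'(x) \<equiv> 0\<close> mod \<open>t\<close>, so
  \<open>q(x) \<equiv> q(s)\<close> mod \<open>t\<^sup>2\<close>. Hence the finitely many values \<open>q(s)\<close> serve as the \<open>b\<^sub>i\<close>.\<close>

context
  fixes v :: "'a::field \<Rightarrow> int"
  assumes dv: "discrete_valuation v"
begin

lemma valuation_mult: "x \<noteq> 0 \<Longrightarrow> y \<noteq> 0 \<Longrightarrow> v (x * y) = v x + v y"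
  using dv unfolding discrete_valuation_def by blast

lemma valuation_add: "x \<noteq> 0 \<Longrightarrow> y \<noteq> 0 \<Longrightarrow> x + y \<noteq> 0 \<Longrightarrow> min (v x) (v y) \<le> v (x + y)"
  using dv unfolding discrete_valuation_def by blast

lemma valuation_one: "v 1 = 0"
  using valuation_mult[of 1 1] by simp

lemma valuation_uminus: "v (- x) = v x"
proof (cases "x = 0")
  case False
  have "v (-1) = 0"
    using valuation_mult[of "-1" "-1"] valuation_one by simp
  then show ?thesis using valuation_mult[of "-1" x] False by simp
qed simp

lemma valring_add: "x \<in> valring v \<Longrightarrow> y \<in> valring v \<Longrightarrow> x + y \<in> valring v"
  unfolding valring_def
  by (cases "x = 0"; cases "y = 0"; cases "x + y = 0") (auto dest!: valuation_add[of x y])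

lemma valring_mult: "x \<in> valring v \<Longrightarrow> y \<in> valring v \<Longrightarrow> x * y \<in> valring v"
  unfolding valring_def by (cases "x = 0"; cases "y = 0") (auto simp: valuation_mult)

lemma valring_uminus: "x \<in> valring v \<Longrightarrow> - x \<in> valring v"
  unfolding valring_def by (auto simp: valuation_uminus)

lemma valring_diff: "x \<in> valring v \<Longrightarrow> y \<in> valring v \<Longrightarrow> x - y \<in> valring v"
  using valring_add[OF _ valring_uminus, of x y] by simp

lemma valring_zero: "0 \<in> valring v" and valring_one: "1 \<in> valring v"
  unfolding valring_def by (auto simp: valuation_one)

lemma valring_of_nat: "of_nat n \<in> valring v"
  by (induction n) (auto intro: valring_add valring_zero valring_one)

lemma maxideal_add: "x \<in> maxideal v \<Longrightarrow> y \<in> maxideal v \<Longrightarrow> x + y \<in> maxideal v"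
  unfolding maxideal_def
  by (cases "x = 0"; cases "y = 0"; cases "x + y = 0") (auto dest!: valuation_add[of x y])

lemma maxideal_mult_left: "x \<in> valring v \<Longrightarrow> y \<in> maxideal v \<Longrightarrow> x * y \<in> maxideal v"
  unfolding valring_def maxideal_def by (cases "x = 0"; cases "y = 0") (auto simp: valuation_mult)

lemma maxideal_mult_right: "x \<in> maxideal v \<Longrightarrow> y \<in> valring v \<Longrightarrow> x * y \<in> maxideal v"
  using maxideal_mult_left[of y x] by (simp add: mult.commute)

lemma maxideal_diff: "x \<in> maxideal v \<Longrightarrow> y \<in> maxideal v \<Longrightarrow> x - y \<in> maxideal v"
  using maxideal_add[of x "- y"] unfolding maxideal_def by (auto simp: valuation_uminus)

lemma maxideal_prime:
  "x \<in> valring v \<Longrightarrow> y \<in> valring v \<Longrightarrow> x * y \<in> maxideal v \<Longrightarrow>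
   x \<in> maxideal v \<or> y \<in> maxideal v"
  unfolding valring_def maxideal_def by (cases "x = 0"; cases "y = 0") (auto simp: valuation_mult)

lemma maxideal_uniformizer_multiple:
  assumes "t \<noteq> 0" "v t = 1" "h \<in> maxideal v"
  shows "\<exists>u \<in> valring v. h = t * u"
proof (cases "h = 0")
  case True
  then show ?thesis using valring_zero by auto
next
  case False
  have "v h = 1 + v (h / t)"
    using valuation_mult[of t "h / t"] assms(1,2) False by simp
  then have "0 \<le> v (h / t)" using assms(3) False unfolding maxideal_def by auto
  then show ?thesis using assms(1) by (intro bexI[of _ "h / t"]) (auto simp: valring_def)
qed

definition intpoly :: "'a poly \<Rightarrow> bool" where
  "intpoly p \<longleftrightarrow> (\<forall>i. coeff p i \<in> valring v)"

lemma intpoly_pCons: "intpoly (pCons c p) \<longleftrightarrow> c \<in> valring v \<and> intpoly p"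
  unfolding intpoly_def by (metis coeff_pCons_0 coeff_pCons_Suc not0_implies_Suc)

lemma poly_in_valring: "intpoly p \<Longrightarrow> a \<in> valring v \<Longrightarrow> poly p a \<in> valring v"
  by (induction p) (auto simp: intpoly_pCons intro: valring_add valring_mult valring_zero)

lemma intpoly_pderiv: "intpoly p \<Longrightarrow> intpoly (pderiv p)"
  unfolding intpoly_def coeff_pderiv by (metis valring_mult valring_of_nat)

lemma intpoly_synthetic_div: "intpoly p \<Longrightarrow> c \<in> valring v \<Longrightarrow> intpoly (synthetic_div p c)"
  by (induction p) (auto simp: intpoly_pCons intro: poly_in_valring)

lemma poly_add_increment:
  assumes "intpoly p" "a \<in> valring v" "h \<in> valring v"
  shows "\<exists>r \<in> valring v. poly p (a + h) = poly p a + h * r"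
  using assms
proof (induction p)
  case (pCons c p)
  then obtain r where r: "r \<in> valring v" "poly p (a + h) = poly p a + h * r"
    by (auto simp: intpoly_pCons)
  have "poly (pCons c p) (a + h) = poly (pCons c p) a + h * (poly p a + (a + h) * r)"
    using r by (simp add: algebra_simps)
  moreover have "poly p a + (a + h) * r \<in> valring v"
    using pCons r by (auto simp: intpoly_pCons intro!: valring_add valring_mult poly_in_valring)
  ultimately show ?case by blast
qed (use valring_zero in auto)

lemma poly_taylor2:
  assumes "intpoly p" "a \<in> valring v" "h \<in> valring v"
  shows "\<exists>r \<in> valring v. poly p (a + h) = poly p a + h * poly (pderiv p) a + h\<^sup>2 * r"
  using assms
proof (induction p)
  case (pCons c p)
  then obtain r where r: "r \<in> valring v"
      "poly p (a + h) = poly p a + h * poly (pderiv p) a + h\<^sup>2 * r"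
    by (auto simp: intpoly_pCons)
  have "poly (pCons c p) (a + h) = poly (pCons c p) a + h * poly (pderiv (pCons c p)) a
        + h\<^sup>2 * (poly (pderiv p) a + (a + h) * r)"
    using r by (simp add: pderiv_pCons algebra_simps power2_eq_square)
  moreover have "poly (pderiv p) a + (a + h) * r \<in> valring v"
    using pCons r
    by (auto simp: intpoly_pCons intro!: valring_add valring_mult poly_in_valring intpoly_pderiv)
  ultimately show ?case by blast
qed (use valring_zero in auto)

lemma residue_root_factor:
  assumes "intpoly p" "a \<in> valring v" "poly p a \<in> maxideal v" "\<exists>i. coeff p i \<notin> maxideal v"
  defines "g \<equiv> synthetic_div p a"
  shows "degree g < degree p" and "\<exists>i. coeff g i \<notin> maxideal v"
    and "\<And>x. x \<in> valring v \<Longrightarrow> poly p x \<in> maxideal v \<Longrightarrow>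
           x - a \<in> maxideal v \<or> poly g x \<in> maxideal v"
proof -
  have factor: "p = pCons (poly p a) g - smult a g"
    using synthetic_div_correct[of p a] unfolding g_def by (simp add: algebra_simps)
  have coeff_p: "coeff p i = coeff (pCons (poly p a) g) i - a * coeff g i" for i
    by (subst factor) simp
  show g_nonzero: "\<exists>i. coeff g i \<notin> maxideal v"
  proof (rule ccontr)
    assume "\<not> ?thesis"
    then have g: "coeff g i \<in> maxideal v" for i by blast
    then have "coeff (pCons (poly p a) g) i \<in> maxideal v" for i
      using assms(3) by (cases i) auto
    then have "coeff p i \<in> maxideal v" for i
      using g assms(2) by (auto simp: coeff_p intro: maxideal_diff maxideal_mult_left)
    then show False using assms(4) by blast
  qed
  have "degree p \<noteq> 0"
  proof
    assume "degree p = 0"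
    then have "g = 0" by (simp add: g_def synthetic_div_eq_0_iff)
    then show False using g_nonzero by (simp add: maxideal_def)
  qed
  then show "degree g < degree p" by (simp add: g_def degree_synthetic_div)
  fix x assume x: "x \<in> valring v" "poly p x \<in> maxideal v"
  have "(x - a) * poly g x = poly p x - poly p a"
    using arg_cong[OF factor, of "\<lambda>q. poly q x"] by (simp add: algebra_simps)
  then have "(x - a) * poly g x \<in> maxideal v" using maxideal_diff[OF x(2) assms(3)] by simp
  then show "x - a \<in> maxideal v \<or> poly g x \<in> maxideal v"
    using assms(1,2) x(1)
    by (intro maxideal_prime) (auto simp: g_def intro: valring_diff poly_in_valring intpoly_synthetic_div)
qed

lemma residue_roots_finite:
  "intpoly p \<Longrightarrow> (\<exists>i. coeff p i \<notin> maxideal v) \<Longrightarrow>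
   \<exists>S. finite S \<and> S \<subseteq> valring v \<and>
     (\<forall>x \<in> valring v. poly p x \<in> maxideal v \<longrightarrow> (\<exists>s\<in>S. x - s \<in> maxideal v))"
proof (induction "degree p" arbitrary: p rule: less_induct)
  case less
  show ?case
  proof (cases "\<exists>a \<in> valring v. poly p a \<in> maxideal v")
    case False
    then show ?thesis by (intro exI[of _ "{}"]) auto
  next
    case True
    then obtain a where a: "a \<in> valring v" "poly p a \<in> maxideal v" by blast
    note factor = residue_root_factor[OF less(2) a less(3)]
    obtain S where S: "finite S" "S \<subseteq> valring v"
      "\<forall>x \<in> valring v. poly (synthetic_div p a) x \<in> maxideal v \<longrightarrow> (\<exists>s\<in>S. x - s \<in> maxideal v)"
      using less(1)[OF factor(1) intpoly_synthetic_div[OF less(2) a(1)] factor(2)] by blast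
    show ?thesis
      using S a factor(3) by (intro exI[of _ "insert a S"]) auto
  qed
qed

lemma critical_value_mod_uniformizer_square:
  assumes "t \<noteq> 0" "v t = 1" "intpoly q"
    and "x \<in> valring v" "s \<in> valring v" "x - s \<in> maxideal v"
    and "poly (pderiv q) x \<in> maxideal v"
  shows "\<exists>z \<in> valring v. poly q x = poly q s + t\<^sup>2 * z"
proof -
  obtain u where u: "u \<in> valring v" "x = s + t * u"
    using maxideal_uniformizer_multiple[OF assms(1,2,6)] by (auto simp: algebra_simps)
  have "t \<in> valring v" using assms(2) by (simp add: valring_def)
  then have tu: "t * u \<in> valring v" using u(1) by (rule valring_mult)
  obtain r1 where r1: "r1 \<in> valring v"
      "poly (pderiv q) x = poly (pderiv q) s + t * u * r1"
    using poly_add_increment[OF intpoly_pderiv[OF assms(3)] assms(5) tu] u(2) by auto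
  have "t * u * r1 \<in> maxideal v"
    using assms(6) u(2) r1(1) by (auto intro: maxideal_mult_right)
  then have "poly (pderiv q) s \<in> maxideal v"
    using maxideal_diff[OF assms(7)] r1(2) by force
  then obtain w where w: "w \<in> valring v" "poly (pderiv q) s = t * w"
    using maxideal_uniformizer_multiple[OF assms(1,2)] by blast
  obtain r2 where r2: "r2 \<in> valring v"
      "poly q x = poly q s + t * u * poly (pderiv q) s + (t * u)\<^sup>2 * r2"
    using poly_taylor2[OF assms(3,5) tu] u(2) by auto
  have "poly q x = poly q s + t\<^sup>2 * (u * w + u\<^sup>2 * r2)"
    unfolding r2(2) w(2) by (simp add: algebra_simps power2_eq_square)
  moreover have "u * w + u\<^sup>2 * r2 \<in> valring v"
    using u(1) w(1) r2(1) by (auto simp: power2_eq_square intro!: valring_add valring_mult)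
  ultimately show ?thesis by blast
qed

end

theorem lemma4p7:
  fixes v :: "'a::field \<Rightarrow> int" and t :: 'a and q :: "'a poly" and A :: nat
  assumes "discrete_valuation v"
    and "henselian v"
    and "infinite_residue_field v"
    and "t \<noteq> 0" and "v t = 1"
    and "\<forall>i. coeff q i \<in> valring v"
    and "degree q \<ge> 1"
    and "\<exists>i. coeff (pderiv q) i \<notin> maxideal v"
    and "A \<in> {1, 2}"
  shows "\<exists>B. finite B \<and> B \<subseteq> valring v \<and>
           (\<forall>b \<in> valring v.
              (\<exists>x \<in> valring v. (\<exists>y \<in> valring v. poly q x = b + t ^ A * y) \<and>
                                 poly (pderiv q) x \<in> maxideal v)
              \<longrightarrow> (\<exists>c \<in> B. \<exists>y \<in> valring v. b = c + t ^ A * y))"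
proof -
  note dv = assms(1)
  have q: "intpoly v q" using assms(6) by (simp add: intpoly_def[OF dv])
  obtain S where S: "finite S" "S \<subseteq> valring v"
      "\<forall>x \<in> valring v. poly (pderiv q) x \<in> maxideal v \<longrightarrow> (\<exists>s\<in>S. x - s \<in> maxideal v)"
    using residue_roots_finite[OF dv intpoly_pderiv[OF dv q] assms(8)] by blast
  have t: "t \<in> valring v" using assms(5) by (simp add: valring_def)
  have "\<exists>c \<in> poly q ` S. \<exists>y' \<in> valring v. b = c + t ^ A * y'"
    if x: "x \<in> valring v" "y \<in> valring v" "poly q x = b + t ^ A * y"
      "poly (pderiv q) x \<in> maxideal v" for b x y
  proof -
    obtain s where s: "s \<in> S" "x - s \<in> maxideal v" using S(3) x(1,4) by blast
    obtain z where z: "z \<in> valring v" "poly q x = poly q s + t\<^sup>2 * z"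
      using critical_value_mod_uniformizer_square[OF dv assms(4,5) q x(1) _ s(2) x(4)] s S(2)
      by blast
    have "t\<^sup>2 = t ^ A * t ^ (2 - A)"
      using assms(9) by (auto simp: power2_eq_square)
    then have "b = poly q s + t ^ A * (t ^ (2 - A) * z - y)"
      using x(3) z(2) by (simp add: algebra_simps)
    moreover have "t ^ (2 - A) * z - y \<in> valring v"
      using assms(9) t z(1) x(2) valring_one[OF dv]
      by (auto intro!: valring_diff[OF dv] valring_mult[OF dv])
    ultimately show ?thesis using s(1) by blast
  qed
  then show ?thesis
    using S(1,2) poly_in_valring[OF dv q] by (intro exI[of _ "poly q ` S"]) auto
qed

end
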